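(* Let $k\ge3$, let $G=(V,E)$ be a $k$-uniform hypergraph with connected components $V_1,\dots,V_s$ ($s\ge1$), and let $\mathbf x\in\mathbb C^n$ be an eigenvector of the Laplacian tensor $\mathcal D-\mathcal A$ (respectively, of the signless Laplacian tensor $\mathcal D+\mathcal A$) corresponding to the eigenvalue $0$. Then for every $i\in[s]$ with $\mathbf x(V_i)\neq0$: (a) $\mathbf x(V_i)$ is an eigenvector of the sub-tensor $(\mathcal D-\mathcal A)(V_i)$ (respectively $(\mathcal D+\mathcal A)(V_i)$) corresponding to the eigenvalue $0$; (b) $\mathrm{sup}(\mathbf x(V_i))=V_i$; and (c) there exist $\gamma_i\in\mathbb C\setminus\{0\}$ and nonnegative integers $\alpha_j$ ($j\in V_i$) such that $x_j=\gamma_i\exp\!\big(\tfrac{2\alpha_j\pi}{k}\sqrt{-1}\big)$ for all $j\in V_i$.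
   Context: A $k$-uniform hypergraph $G=(V,E)$ has vertex set $V=[n]$ ($n\ge k$) and a nonempty edge set $E$ of $k$-element subsets of $V$; $E_i=\{e\in E:i\in e\}$, $d_i=|E_i|$. Two distinct vertices are connected if there is a sequence of edges $e_1,\dots,e_m$ with $i\in e_1$, $j\in e_m$, $e_r\cap e_{r+1}\ne\emptyset$. A connected component is a maximal set of pairwise connected vertices; an isolated vertex (degree $0$, a singleton) is also a connected component, so the components partition $V$. The adjacency tensor $\mathcal A$ has $a_{i_1\dots i_k}=\frac1{(k-1)!}$ if $\{i_1,\dots,i_k\}\in E$, else $0$; $\mathcal D$ is diagonal with $d_{i\dots i}=d_i$. Thus $((\mathcal D\pm\mathcal A)\mathbf x^{k-1})_i=d_ix_i^{k-1}\pm\sum_{e\in E_i}\prod_{j\in e\setminus\{i\}}x_j$. $\lambda$ is an eigenvalue of a tensor $\mathcal T$ with eigenvector $\mathbf x\in\mathbb C^n\setminus\{0\}$ if $(\mathcal T\mathbf x^{k-1})_i=\lambda x_i^{k-1}$ for all $i$. For $S=\{j_1,\dots,j_m\}\subseteq[n]$, the sub-tensor $\mathcal T(S)$ is the order-$k$ dimension-$m$ tensor with entries $t_{j_{i_1}\dots j_{i_k}}$, and $\mathbf x(S)$ is the subvector $(x_j)_{j\in S}$. $\mathrm{sup}(\mathbf x)=\{i: x_i\ne0\}$. *)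

theory Defs
  imports Complex_Main
begin

definition uniform_hypergraph :: "nat \<Rightarrow> nat \<Rightarrow> nat set set \<Rightarrow> bool" where
  "uniform_hypergraph k n E \<longleftrightarrow> n \<ge> k \<and> E \<noteq> {} \<and>
     (\<forall>e\<in>E. e \<subseteq> {1..n} \<and> card e = k)"

definition edges_at :: "nat set set \<Rightarrow> nat \<Rightarrow> nat set set" where
  "edges_at E i = {e\<in>E. i \<in> e}"

definition degree :: "nat set set \<Rightarrow> nat \<Rightarrow> nat" where
  "degree E i = card (edges_at E i)"

definition connected_in :: "nat set set \<Rightarrow> nat \<Rightarrow> nat \<Rightarrow> bool" where
  "connected_in E i j \<longleftrightarrow> i = j \<or>
     (\<exists>es. es \<noteq> [] \<and> set es \<subseteq> E \<and> i \<in> hd es \<and> j \<in> last es \<and>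
        (\<forall>r. Suc r < length es \<longrightarrow> es ! r \<inter> es ! Suc r \<noteq> {}))"

text \<open>Connected components: maximal nonempty sets of pairwise connected vertices
  (isolated vertices are singleton components).\<close>
definition connected_component :: "nat \<Rightarrow> nat set set \<Rightarrow> nat set \<Rightarrow> bool" where
  "connected_component n E C \<longleftrightarrow> C \<noteq> {} \<and> C \<subseteq> {1..n} \<and>
     (\<forall>i\<in>C. \<forall>j\<in>C. connected_in E i j) \<and>
     (\<forall>i\<in>C. \<forall>j\<in>{1..n}. connected_in E i j \<longrightarrow> j \<in> C)"

text \<open>Order-k tensors are functions on index lists (of length k).\<close>
type_synonym tensor = "nat list \<Rightarrow> complex"

definition adjacency_tensor :: "nat \<Rightarrow> nat set set \<Rightarrow> tensor" where
  "adjacency_tensor k E is =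
     (if length is = k \<and> set is \<in> E then 1 / of_nat (fact (k - 1)) else 0)"

definition degree_tensor :: "nat \<Rightarrow> nat set set \<Rightarrow> tensor" where
  "degree_tensor k E is =
     (if length is = k \<and> is \<noteq> [] \<and> (\<forall>j\<in>set is. j = hd is) then of_nat (degree E (hd is)) else 0)"

text \<open>sigma = -1: Laplacian D - A; sigma = 1: signless Laplacian D + A.\<close>
definition lap_tensor :: "complex \<Rightarrow> nat \<Rightarrow> nat set set \<Rightarrow> tensor" where
  "lap_tensor \<sigma> k E is = degree_tensor k E is + \<sigma> * adjacency_tensor k E is"

text \<open>(T(S) x(S)^{k-1})_i: the sub-tensor of T on S applied to x(S), at index i in S.
  Indices of the sub-tensor are identified with the elements of S.\<close>
definition tensor_apply :: "tensor \<Rightarrow> nat \<Rightarrow> nat set \<Rightarrow> (nat \<Rightarrow> complex) \<Rightarrow> nat \<Rightarrow> complex" where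
  "tensor_apply T k S x i =
     (\<Sum>is\<in>{is. length is = k - 1 \<and> set is \<subseteq> S}. T (i # is) * prod_list (map x is))"

definition sub_eigenpair :: "tensor \<Rightarrow> nat \<Rightarrow> nat set \<Rightarrow> complex \<Rightarrow> (nat \<Rightarrow> complex) \<Rightarrow> bool" where
  "sub_eigenpair T k S lam x \<longleftrightarrow> (\<exists>j\<in>S. x j \<noteq> 0) \<and>
     (\<forall>i\<in>S. tensor_apply T k S x i = lam * x i ^ (k - 1))"

end

theory Submission
  imports Defs "HOL-Combinatorics.Multiset_Permutations"
begin

text \<open>At a vertex i the eigen-equation reads
  d(i) x(i)^(k-1) + \<sigma> \<Sum>{\<Prod>{x(u) | u \<in> e - {i}} | e \<ni> i} = 0.
  It involves only edges at i, which lie in the component of i, so it survives restriction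
  to a component. Pick a vertex v of maximal modulus in the component: then -x(v)^(k-1)/\<sigma> is
  the average of the d(v) edge products, each of modulus at most |x(v)|^(k-1), so every
  product equals it and every vertex of an edge at v has maximal modulus too. Multiplying
  back the removed vertex, x(v)^k = -\<sigma> \<Prod>{x(u) | u \<in> e}, which is therefore the same for
  all vertices of the edge. Propagating along chains of edges, |x| and x^k are constant and
  nonzero on the component, so there x is a fixed value times k-th roots of unity.\<close>

text \<open>The entry ((D + \<sigma> A) x^(k-1))_i in closed form.\<close>
definition lap_form :: "complex \<Rightarrow> nat \<Rightarrow> nat set set \<Rightarrow> (nat \<Rightarrow> complex) \<Rightarrow> nat \<Rightarrow> complex" where
  "lap_form \<sigma> k E x i =
     of_nat (degree E i) * x i ^ (k - 1) + \<sigma> * (\<Sum>e\<in>edges_at E i. \<Prod>u\<in>e - {i}. x u)"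

lemma finite_lists_length_subset: "finite S \<Longrightarrow> finite {ys. length ys = m \<and> set ys \<subseteq> S}"
  using finite_lists_length_eq[of S m] by (simp add: conj_commute)

lemma sum_lists_degree_tensor:
  assumes "finite S" "i \<in> S" "k \<ge> 1"
  shows "(\<Sum>ys | length ys = k - 1 \<and> set ys \<subseteq> S. degree_tensor k E (i # ys) * prod_list (map x ys))
       = of_nat (degree E i) * x i ^ (k - 1)"
proof -
  let ?L = "{ys. length ys = k - 1 \<and> set ys \<subseteq> S}"
  let ?r = "replicate (k - 1) i"
  have "degree_tensor k E (i # ys) * prod_list (map x ys)
      = (if ys = ?r then of_nat (degree E i) * prod_list (map x ys) else 0)" if "ys \<in> ?L" for ys
  proof -
    from that have "(\<forall>j\<in>set (i # ys). j = hd (i # ys)) \<longleftrightarrow> ys = ?r"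
      by (auto simp: replicate_length_same intro: replicate_eqI)
    with that assms(3) show ?thesis by (auto simp: degree_tensor_def)
  qed
  then have "(\<Sum>ys\<in>?L. degree_tensor k E (i # ys) * prod_list (map x ys))
      = (\<Sum>ys\<in>?L. if ys = ?r then of_nat (degree E i) * prod_list (map x ys) else 0)"
    by (rule sum.cong[OF refl])
  also have "\<dots> = of_nat (degree E i) * x i ^ (k - 1)"
    using assms by (simp add: sum.delta' finite_lists_length_subset prod_list_replicate set_replicate_conv_if)
  finally show ?thesis .
qed

lemma insert_in_edges_iff_permutation:
  assumes "\<forall>e\<in>E. card e = k" "k \<ge> 1" "length ys = k - 1"
  shows "insert i (set ys) \<in> E \<longleftrightarrow> ys \<in> (\<Union>e\<in>edges_at E i. permutations_of_set (e - {i}))"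
proof
  assume e: "insert i (set ys) \<in> E"
  with assms have "distinct (i # ys)" by (intro card_distinct) auto
  with e show "ys \<in> (\<Union>e\<in>edges_at E i. permutations_of_set (e - {i}))"
    by (intro UN_I[of "set (i # ys)"]) (auto simp: edges_at_def permutations_of_set_def)
next
  assume "ys \<in> (\<Union>e\<in>edges_at E i. permutations_of_set (e - {i}))"
  then obtain e where "e \<in> E" "i \<in> e" "set ys = e - {i}"
    by (auto simp: edges_at_def permutations_of_set_def)
  then show "insert i (set ys) \<in> E" by (simp add: insert_absorb)
qed

lemma sum_lists_adjacency_tensor:
  assumes "finite S" "finite E" "\<forall>e\<in>edges_at E i. e \<subseteq> S" "\<forall>e\<in>E. card e = k" "k \<ge> 1"
  shows "(\<Sum>ys | length ys = k - 1 \<and> set ys \<subseteq> S. adjacency_tensor k E (i # ys) * prod_list (map x ys))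
       = (\<Sum>e\<in>edges_at E i. \<Prod>u\<in>e - {i}. x u)"
proof -
  let ?L = "{ys. length ys = k - 1 \<and> set ys \<subseteq> S}"
  let ?N = "\<Union>e\<in>edges_at E i. permutations_of_set (e - {i})"
  define c :: complex where "c = 1 / of_nat (fact (k - 1))"
  \<comment> \<open>each edge at i is hit by its (k-1)! orderings of e - {i}, cancelling the factor c\<close>
  have card_e: "card (e - {i}) = k - 1" if "e \<in> edges_at E i" for e
    using that assms(4) by (simp add: edges_at_def card_Diff_singleton)
  have "?N \<subseteq> ?L"
    using assms(3) card_e by (auto simp: permutations_of_set_def) (metis distinct_card)
  have "(\<Sum>ys\<in>?L. adjacency_tensor k E (i # ys) * prod_list (map x ys))
      = (\<Sum>ys\<in>?L. if ys \<in> ?N then c * prod_list (map x ys) else 0)"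
    using assms(4,5) insert_in_edges_iff_permutation[OF assms(4,5)]
    by (intro sum.cong) (simp_all add: adjacency_tensor_def c_def)
  also have "\<dots> = (\<Sum>ys\<in>?L \<inter> ?N. c * prod_list (map x ys))"
    using assms(1) by (simp add: sum.inter_restrict finite_lists_length_subset)
  also have "\<dots> = (\<Sum>ys\<in>?N. c * prod_list (map x ys))"
    using \<open>?N \<subseteq> ?L\<close> by (simp only: Int_absorb1)
  also have "\<dots> = (\<Sum>e\<in>edges_at E i. \<Sum>ys\<in>permutations_of_set (e - {i}). c * prod_list (map x ys))"
  proof (rule sum.UNION_disjoint)
    show "finite (edges_at E i)" using assms(2) by (simp add: edges_at_def)
    show "\<forall>e\<in>edges_at E i. \<forall>e'\<in>edges_at E i. e \<noteq> e' \<longrightarrow>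
        permutations_of_set (e - {i}) \<inter> permutations_of_set (e' - {i}) = {}"
      unfolding edges_at_def permutations_of_set_def by blast
  qed simp
  also have "\<dots> = (\<Sum>e\<in>edges_at E i. \<Prod>u\<in>e - {i}. x u)"
  proof (rule sum.cong[OF refl])
    fix e assume e: "e \<in> edges_at E i"
    then have "finite e"
      using assms(4,5) by (metis card.infinite edges_at_def mem_Collect_eq not_one_le_zero)
    have "(\<Sum>ys\<in>permutations_of_set (e - {i}). c * prod_list (map x ys))
        = (\<Sum>ys\<in>permutations_of_set (e - {i}). c * (\<Prod>u\<in>e - {i}. x u))"
      by (intro sum.cong) (auto simp: permutations_of_set_def simp flip: prod.distinct_set_conv_list)
    also have "\<dots> = of_nat (fact (k - 1)) * c * (\<Prod>u\<in>e - {i}. x u)"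
      using \<open>finite e\<close> card_e[OF e] by simp
    also have "\<dots> = (\<Prod>u\<in>e - {i}. x u)"
      by (simp add: c_def)
    finally show "(\<Sum>ys\<in>permutations_of_set (e - {i}). c * prod_list (map x ys)) = (\<Prod>u\<in>e - {i}. x u)" .
  qed
  finally show ?thesis .
qed

lemma tensor_apply_lap_tensor:
  assumes "finite S" "finite E" "i \<in> S" "\<forall>e\<in>edges_at E i. e \<subseteq> S" "\<forall>e\<in>E. card e = k" "k \<ge> 1"
  shows "tensor_apply (lap_tensor \<sigma> k E) k S x i = lap_form \<sigma> k E x i"
  using sum_lists_degree_tensor[OF assms(1,3,6)] sum_lists_adjacency_tensor[OF assms(1,2,4,5,6)]
  by (simp add: tensor_apply_def lap_tensor_def lap_form_def distrib_right sum.distrib mult.assoc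
      flip: sum_distrib_left)

lemma eq_if_sum_eq_card_mult_norm_le:
  fixes z :: "'a \<Rightarrow> complex"
  assumes "finite A" "\<forall>e\<in>A. cmod (z e) \<le> cmod a" "sum z A = of_nat (card A) * a" "e \<in> A"
  shows "z e = a"
proof -
  define f where "f e = cmod a ^ 2 - Re (z e * cnj a)" for e
  \<comment> \<open>the f e are nonnegative with sum 0, and |z e - a|^2 \<le> 2 f e\<close>
  have f_nonneg: "f e \<ge> 0" if "e \<in> A" for e
  proof -
    have "Re (z e * cnj a) \<le> cmod (z e) * cmod a"
      using complex_Re_le_cmod[of "z e * cnj a"] by (simp add: norm_mult)
    also have "\<dots> \<le> cmod a * cmod a"
      using assms(2) that by (simp add: mult_right_mono)
    finally show ?thesis by (simp add: f_def power2_eq_square)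
  qed
  have "sum f A = of_nat (card A) * cmod a ^ 2 - Re (sum z A * cnj a)"
    by (simp add: f_def sum_subtractf sum_distrib_right)
  also have "Re (sum z A * cnj a) = of_nat (card A) * cmod a ^ 2"
    using assms(3) by (simp add: mult.assoc complex_mult_cnj cmod_def)
  finally have "sum f A = 0" by simp
  then have "f e = 0"
    using sum_nonneg_eq_0_iff[OF assms(1)] f_nonneg assms(4) by blast
  have "cmod (z e - a) ^ 2 = cmod (z e) ^ 2 - 2 * Re (z e * cnj a) + cmod a ^ 2"
    unfolding cmod_power2 by (simp add: power2_eq_square algebra_simps)
  also have "\<dots> \<le> 0"
    using \<open>f e = 0\<close> assms(2,4) unfolding f_def by (smt (verit) norm_ge_zero power_mono)
  finally show "z e = a" by simp
qed

lemma eq_bound_if_prod_eq_power: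
  fixes f :: "'a \<Rightarrow> 'b::linordered_idom"
  assumes "finite A" "\<forall>u\<in>A. 0 \<le> f u \<and> f u \<le> m" "prod f A = m ^ card A" "m > 0" "u \<in> A"
  shows "f u = m"
proof (rule ccontr)
  assume "f u \<noteq> m"
  with assms(2,5) have "f u < m" by force
  have "prod f (A - {u}) \<le> m ^ card (A - {u})"
    using assms(2) prod_mono[of "A - {u}" f "\<lambda>_. m"] by simp
  then have "prod f A \<le> f u * m ^ card (A - {u})"
    using assms(1,2,5) by (simp add: prod.remove mult_left_mono)
  also have "\<dots> < m * m ^ card (A - {u})"
    using \<open>f u < m\<close> assms(4) by simp
  also have "\<dots> = m ^ card A"
    using assms(1,5) by (metis card_Suc_Diff1 power_Suc)
  finally show False using assms(3) by simp
qed

lemma power_eq_if_prod_Diff_eq: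
  fixes x :: "'a \<Rightarrow> 'b::idom"
  assumes "finite e" "u \<in> e" "v \<in> e" "c \<noteq> 0" "k \<ge> 1"
    and "(\<Prod>w\<in>e - {u}. x w) = c * x u ^ (k - 1)" "(\<Prod>w\<in>e - {v}. x w) = c * x v ^ (k - 1)"
  shows "x u ^ k = x v ^ k"
proof -
  have "c * x w ^ k = prod x e" if "w \<in> e" "(\<Prod>w'\<in>e - {w}. x w') = c * x w ^ (k - 1)" for w
  proof -
    have "c * x w ^ k = x w * (c * x w ^ (k - 1))"
      using assms(5) by (metis Suc_diff_le diff_Suc_1 mult.left_commute power_Suc)
    also have "\<dots> = prod x e"
      using that assms(1) by (simp add: prod.remove)
    finally show ?thesis .
  qed
  then have "c * x u ^ k = c * x v ^ k"
    using assms(2,3,6,7) by simp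
  with assms(4) show ?thesis by simp
qed

lemma power_eq_imp_eq_mult_root_of_unity:
  fixes z \<gamma> :: complex
  assumes "\<gamma> \<noteq> 0" "k > 0" "z ^ k = \<gamma> ^ k"
  shows "\<exists>a::nat. z = \<gamma> * exp (complex_of_real (2 * real a * pi / real k) * \<i>)"
proof -
  have "(z / \<gamma>) ^ k = 1" using assms by (simp add: power_divide)
  then obtain a where "z / \<gamma> = cis (2 * pi * real a / real k)"
    using bij_betw_roots_unity[OF assms(2)] unfolding bij_betw_def by force
  then have "z = \<gamma> * exp (complex_of_real (2 * real a * pi / real k) * \<i>)"
    using assms(1) by (simp add: cis_conv_exp field_simps)
  then show ?thesis ..
qed

lemma uniform_hypergraph_finite_edges:
  assumes "uniform_hypergraph k n E"
  shows "finite E"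
proof (rule finite_subset)
  show "E \<subseteq> Pow {1..n}" using assms by (auto simp: uniform_hypergraph_def)
qed simp

lemma connected_in_propagate:
  assumes "connected_in E i j" "P i"
    and step: "\<And>e u v. e \<in> E \<Longrightarrow> u \<in> e \<Longrightarrow> v \<in> e \<Longrightarrow> P u \<Longrightarrow> P v"
  shows "P j"
proof (cases "i = j")
  case False
  then obtain es where es: "es \<noteq> []" "set es \<subseteq> E" "i \<in> hd es" "j \<in> last es"
    and linked: "\<forall>r. Suc r < length es \<longrightarrow> es ! r \<inter> es ! Suc r \<noteq> {}"
    using assms(1) unfolding connected_in_def by blast
  have "\<forall>u\<in>es ! r. P u" if "r < length es" for r
    using that
  proof (induction r)
    case 0
    then have "es ! 0 \<in> E" "i \<in> es ! 0"
      using es(2,3) nth_mem[of 0 es] by (auto simp: hd_conv_nth)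
    then show ?case
      using assms(2) step by blast
  next
    case (Suc r)
    then obtain w where "w \<in> es ! r" "w \<in> es ! Suc r"
      using linked by blast
    moreover have "es ! Suc r \<in> E"
      using Suc.prems es(2) nth_mem by blast
    ultimately show ?case
      using Suc step by (meson Suc_lessD)
  qed
  moreover have "j \<in> es ! (length es - 1)" "length es - 1 < length es"
    using es(1,4) by (simp_all add: last_conv_nth)
  ultimately show ?thesis by blast
qed (use assms(2) in simp)

lemma connected_component_edge_subset:
  assumes "connected_component n E C" "uniform_hypergraph k n E" "i \<in> C" "e \<in> E" "i \<in> e"
  shows "e \<subseteq> C"
proof
  fix u assume "u \<in> e"
  then have "connected_in E i u"
    using assms(4,5) unfolding connected_in_def by (intro disjI2 exI[of _ "[e]"]) auto
  moreover have "u \<in> {1..n}"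
    using assms(2,4) \<open>u \<in> e\<close> unfolding uniform_hypergraph_def by blast
  ultimately show "u \<in> C"
    using assms(1,3) unfolding connected_component_def by blast
qed

lemma lap_form_zero_at_max_modulus:
  fixes x :: "nat \<Rightarrow> complex"
  assumes "lap_form \<sigma> k E x v = 0" "cmod \<sigma> = 1" "finite E" "\<forall>e\<in>E. card e = k" "k \<ge> 1"
    and "\<forall>e\<in>edges_at E v. \<forall>u\<in>e. cmod (x u) \<le> cmod (x v)" "x v \<noteq> 0" "e \<in> E" "v \<in> e"
  shows "(\<Prod>u\<in>e - {v}. x u) = - (x v ^ (k - 1)) / \<sigma>" "\<forall>u\<in>e. cmod (x u) = cmod (x v)"
proof -
  define a where "a = - (x v ^ (k - 1)) / \<sigma>"
  have norm_a: "cmod a = cmod (x v) ^ (k - 1)"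
    using assms(2) by (simp add: a_def norm_divide norm_power)
  have card_e: "card (e' - {v}) = k - 1" if "e' \<in> edges_at E v" for e'
    using that assms(4) by (simp add: edges_at_def card_Diff_singleton)
  have "\<sigma> \<noteq> 0" using assms(2) by auto
  from assms(1) have "\<sigma> * (\<Sum>e'\<in>edges_at E v. \<Prod>u\<in>e' - {v}. x u)
      = - (of_nat (card (edges_at E v)) * x v ^ (k - 1))"
    by (simp add: lap_form_def degree_def eq_neg_iff_add_eq_0 add.commute)
  with \<open>\<sigma> \<noteq> 0\<close> have sum_eq: "(\<Sum>e'\<in>edges_at E v. \<Prod>u\<in>e' - {v}. x u) = of_nat (card (edges_at E v)) * a"
    by (simp add: a_def field_simps)
  have bound: "\<forall>e'\<in>edges_at E v. cmod (\<Prod>u\<in>e' - {v}. x u) \<le> cmod a"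
  proof
    fix e' assume e': "e' \<in> edges_at E v"
    have "cmod (\<Prod>u\<in>e' - {v}. x u) = (\<Prod>u\<in>e' - {v}. cmod (x u))"
      by (simp add: prod_norm)
    also have "\<dots> \<le> (\<Prod>u\<in>e' - {v}. cmod (x v))"
      using assms(6) e' by (intro prod_mono) auto
    also have "\<dots> = cmod a"
      using card_e[OF e'] norm_a by simp
    finally show "cmod (\<Prod>u\<in>e' - {v}. x u) \<le> cmod a" .
  qed
  have fin: "finite (edges_at E v)" and e: "e \<in> edges_at E v"
    using assms(3,8,9) by (simp_all add: edges_at_def)
  have prod_e: "(\<Prod>u\<in>e - {v}. x u) = a"
    using eq_if_sum_eq_card_mult_norm_le[OF fin bound sum_eq e] .
  then show "(\<Prod>u\<in>e - {v}. x u) = - (x v ^ (k - 1)) / \<sigma>"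
    by (simp add: a_def)
  have "finite e"
    using assms(4,5,8) by (intro card_ge_0_finite) simp
  have "(\<Prod>u\<in>e - {v}. cmod (x u)) = cmod (\<Prod>u\<in>e - {v}. x u)"
    by (simp add: prod_norm)
  also have "\<dots> = cmod (x v) ^ card (e - {v})"
    using prod_e norm_a card_e[OF e] by simp
  finally have prod_norm_e: "(\<Prod>u\<in>e - {v}. cmod (x u)) = cmod (x v) ^ card (e - {v})" .
  have "\<forall>u\<in>e - {v}. 0 \<le> cmod (x u) \<and> cmod (x u) \<le> cmod (x v)"
    using assms(6) e by simp
  moreover have "0 < cmod (x v)"
    using assms(7) by simp
  ultimately show "\<forall>u\<in>e. cmod (x u) = cmod (x v)"
    using eq_bound_if_prod_eq_power[OF _ _ prod_norm_e] \<open>finite e\<close> by blast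
qed

lemma lap_form_zero_component_max_modulus:
  fixes x :: "nat \<Rightarrow> complex"
  assumes "uniform_hypergraph k n E" "k \<ge> 1" "cmod \<sigma> = 1" "connected_component n E C"
    and "\<forall>i\<in>C. lap_form \<sigma> k E x i = 0"
    and "i0 \<in> C" "\<forall>j\<in>C. cmod (x j) \<le> cmod (x i0)" "x i0 \<noteq> 0"
  shows "\<forall>j\<in>C. cmod (x j) = cmod (x i0) \<and> x j ^ k = x i0 ^ k"
proof
  let ?P = "\<lambda>j. j \<in> C \<and> cmod (x j) = cmod (x i0) \<and> x j ^ k = x i0 ^ k"
  have finE: "finite E" and card_k: "\<forall>e\<in>E. card e = k"
    using assms(1) uniform_hypergraph_finite_edges by (auto simp: uniform_hypergraph_def)
  have at_max: "(\<Prod>u\<in>e - {w}. x u) = - (x w ^ (k - 1)) / \<sigma> \<and> (\<forall>u\<in>e. cmod (x u) = cmod (x w))"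
    if "w \<in> C" "cmod (x w) = cmod (x i0)" "e \<in> E" "w \<in> e" for w e
  proof -
    have bound: "\<forall>e'\<in>edges_at E w. \<forall>u\<in>e'. cmod (x u) \<le> cmod (x w)"
    proof (intro ballI)
      fix e' u assume "e' \<in> edges_at E w" "u \<in> e'"
      then have "u \<in> C"
        using connected_component_edge_subset[OF assms(4,1) \<open>w \<in> C\<close>] by (auto simp: edges_at_def)
      then show "cmod (x u) \<le> cmod (x w)"
        using assms(7) that(2) by simp
    qed
    have "x w \<noteq> 0"
      using assms(8) that(2) by auto
    then show ?thesis
      using lap_form_zero_at_max_modulus[OF _ assms(3) finE card_k assms(2) bound _ that(3,4)]
        assms(5) \<open>w \<in> C\<close> by blast
  qed
  have step: "?P u" if "e \<in> E" "v \<in> e" "u \<in> e" "?P v" for e u v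
  proof -
    have "u \<in> C"
      using connected_component_edge_subset[OF assms(4,1)] that by blast
    moreover have "cmod (x u) = cmod (x i0)"
      using at_max[of v e] that by simp
    moreover have "x u ^ k = x v ^ k"
    proof (rule power_eq_if_prod_Diff_eq[where e = e and c = "- 1 / \<sigma>"])
      show "finite e" using that(1) card_k assms(2) by (intro card_ge_0_finite) simp
      show "- 1 / \<sigma> \<noteq> 0" using assms(3) by auto
      show "(\<Prod>w\<in>e - {u}. x w) = - 1 / \<sigma> * x u ^ (k - 1)"
        using at_max[of u e] \<open>u \<in> C\<close> \<open>cmod (x u) = cmod (x i0)\<close> that(1,3) by simp
      show "(\<Prod>w\<in>e - {v}. x w) = - 1 / \<sigma> * x v ^ (k - 1)"
        using at_max[of v e] that(1,2,4) by simp
    qed (use that assms(2) in simp_all)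
    ultimately show ?thesis
      using that(4) by simp
  qed
  fix j assume "j \<in> C"
  then have "connected_in E i0 j"
    using assms(4,6) unfolding connected_component_def by blast
  then have "?P j"
  proof (rule connected_in_propagate[where P = ?P])
    show "?P i0" using assms(6) by simp
  qed (fact step)
  then show "cmod (x j) = cmod (x i0) \<and> x j ^ k = x i0 ^ k"
    by simp
qed

lemma lap_eigenvector_component_equations:
  assumes "uniform_hypergraph k n E" "k \<ge> 1" "connected_component n E C"
    and "sub_eigenpair (lap_tensor \<sigma> k E) k {1..n} 0 x" "i \<in> C"
  shows "lap_form \<sigma> k E x i = 0" "tensor_apply (lap_tensor \<sigma> k E) k C x i = lap_form \<sigma> k E x i"
proof -
  have finE: "finite E" and card_k: "\<forall>e\<in>E. card e = k" and "C \<subseteq> {1..n}"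
    using assms(1,3) uniform_hypergraph_finite_edges
    by (auto simp: uniform_hypergraph_def connected_component_def)
  moreover have "\<forall>e\<in>edges_at E i. e \<subseteq> C"
    using connected_component_edge_subset[OF assms(3,1,5)] by (simp add: edges_at_def)
  ultimately show "tensor_apply (lap_tensor \<sigma> k E) k C x i = lap_form \<sigma> k E x i"
    using assms(2,5) finite_subset[OF \<open>C \<subseteq> {1..n}\<close>] by (intro tensor_apply_lap_tensor) auto
  have "\<forall>e\<in>edges_at E i. e \<subseteq> {1..n}"
    using assms(1) by (auto simp: uniform_hypergraph_def edges_at_def)
  then have "tensor_apply (lap_tensor \<sigma> k E) k {1..n} x i = lap_form \<sigma> k E x i"
    using finE card_k assms(2,5) \<open>C \<subseteq> {1..n}\<close> by (intro tensor_apply_lap_tensor) auto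
  then show "lap_form \<sigma> k E x i = 0"
    using assms(4,5) \<open>C \<subseteq> {1..n}\<close> by (auto simp: sub_eigenpair_def)
qed

theorem lemma4p1:
  fixes k n :: nat and E :: "nat set set" and x :: "nat \<Rightarrow> complex" and \<sigma> :: complex
  assumes "k \<ge> 3"
    and "uniform_hypergraph k n E"
    and "\<sigma> = -1 \<or> \<sigma> = 1"
    and "sub_eigenpair (lap_tensor \<sigma> k E) k {1..n} 0 x"
    and "connected_component n E C"
    and "\<exists>j\<in>C. x j \<noteq> 0"
  shows "sub_eigenpair (lap_tensor \<sigma> k E) k C 0 x
     \<and> {j\<in>C. x j \<noteq> 0} = C
     \<and> (\<exists>\<gamma>::complex. \<gamma> \<noteq> 0 \<and> (\<exists>\<alpha>::nat \<Rightarrow> nat. \<forall>j\<in>C.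
          x j = \<gamma> * exp (complex_of_real (2 * real (\<alpha> j) * pi / real k) * \<i>)))"
proof -
  have k: "k \<ge> 1" using assms(1) by simp
  note equations = lap_eigenvector_component_equations[OF assms(2) k assms(5,4)]
  have "finite C" "C \<noteq> {}"
    using assms(5) finite_subset[of C "{1..n}"] by (auto simp: connected_component_def)
  then have "Max ((\<lambda>j. cmod (x j)) ` C) \<in> (\<lambda>j. cmod (x j)) ` C"
    by simp
  then obtain i0 where "i0 \<in> C" "cmod (x i0) = Max ((\<lambda>j. cmod (x j)) ` C)"
    by (metis imageE)
  then have i0: "i0 \<in> C" "\<forall>j\<in>C. cmod (x j) \<le> cmod (x i0)"
    using \<open>finite C\<close> by simp_all
  have "x i0 \<noteq> 0"
    using assms(6) i0(2) by force
  have same: "\<forall>j\<in>C. cmod (x j) = cmod (x i0) \<and> x j ^ k = x i0 ^ k"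
    by (rule lap_form_zero_component_max_modulus[where \<sigma> = \<sigma>, OF assms(2) k _ assms(5) _ i0 \<open>x i0 \<noteq> 0\<close>])
      (use assms(3) equations(1) in auto)
  have "sub_eigenpair (lap_tensor \<sigma> k E) k C 0 x"
    using assms(6) equations by (simp add: sub_eigenpair_def)
  moreover have "{j\<in>C. x j \<noteq> 0} = C"
    using same \<open>x i0 \<noteq> 0\<close> by force
  moreover have "\<exists>\<alpha>::nat \<Rightarrow> nat. \<forall>j\<in>C.
      x j = x i0 * exp (complex_of_real (2 * real (\<alpha> j) * pi / real k) * \<i>)"
    using same power_eq_imp_eq_mult_root_of_unity[OF \<open>x i0 \<noteq> 0\<close>] k by (intro bchoice) simp
  ultimately show ?thesis
    using \<open>x i0 \<noteq> 0\<close> by blast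
qed

end
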